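(* For every $n\geq 1$, $s_n\equiv t_n \pmod 2$.
   Context: Rectangulations are combinatorial equivalence classes of tilings of the unit square by axis-parallel rectangles, where two tilings are equivalent if a homeomorphism of the square fixing the four corners and preserving horizontality and verticality of segments takes one to the other. $t_n$ is the number of rectangulations with exactly $n$ tiles, and $s_n$ is the number of rectangulations with exactly $n$ tiles that are fixed by the natural action of the dihedral group $D_8$ of symmetries of the square. *)

theory Defs
  imports "HOL-Analysis.Analysis"
begin

type_synonym pt = "real \<times> real"

definition unit_sq :: "pt set" where
  "unit_sq = {0..1} \<times> {0..1}"

definition is_rect :: "pt set \<Rightarrow> bool" where
  "is_rect R \<longleftrightarrow> (\<exists>a b c d. a < b \<and> c < d \<and> R = {a..b} \<times> {c..d})"

definition is_tiling :: "nat \<Rightarrow> pt set set \<Rightarrow> bool" where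
  "is_tiling n T \<longleftrightarrow> finite T \<and> card T = n \<and> (\<forall>R\<in>T. is_rect R) \<and>
     \<Union>T = unit_sq \<and>
     (\<forall>R\<in>T. \<forall>R'\<in>T. R \<noteq> R' \<longrightarrow> interior R \<inter> interior R' = {})"

definition tilings :: "nat \<Rightarrow> pt set set set" where
  "tilings n = {T. is_tiling n T}"

definition skel :: "pt set set \<Rightarrow> pt set" where
  "skel T = (\<Union>R\<in>T. frontier R)"

definition hseg :: "pt set \<Rightarrow> bool" where
  "hseg S \<longleftrightarrow> (\<exists>a b y. a < b \<and> S = {a..b} \<times> {y})"

definition vseg :: "pt set \<Rightarrow> bool" where
  "vseg S \<longleftrightarrow> (\<exists>x c d. c < d \<and> S = {x} \<times> {c..d})"

definition preserves_HV :: "(pt \<Rightarrow> pt) \<Rightarrow> pt set \<Rightarrow> bool" where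
  "preserves_HV h K \<longleftrightarrow> (\<forall>S. S \<subseteq> K \<longrightarrow>
      (hseg S \<longrightarrow> hseg (h ` S)) \<and> (vseg S \<longrightarrow> vseg (h ` S)))"

definition corners :: "pt set" where
  "corners = {(0,0), (1,0), (0,1), (1,1)}"

definition comb_equiv :: "(pt set set \<times> pt set set) set" where
  "comb_equiv = {(T, T'). \<exists>h g. homeomorphism unit_sq unit_sq h g \<and>
      (\<forall>p\<in>corners. h p = p) \<and> (\<lambda>R. h ` R) ` T = T' \<and>
      preserves_HV h (skel T) \<and> preserves_HV g (skel T')}"

definition rectangulations :: "nat \<Rightarrow> pt set set set set" where
  "rectangulations n = tilings n // comb_equiv"

definition t :: "nat \<Rightarrow> nat" where
  "t n = card (rectangulations n)"

definition D8 :: "(pt \<Rightarrow> pt) set" where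
  "D8 = {\<lambda>(x,y). (x,y), \<lambda>(x,y). (1-x,y), \<lambda>(x,y). (x,1-y), \<lambda>(x,y). (1-x,1-y),
         \<lambda>(x,y). (y,x), \<lambda>(x,y). (1-y,x), \<lambda>(x,y). (y,1-x), \<lambda>(x,y). (1-y,1-x)}"

definition act :: "(pt \<Rightarrow> pt) \<Rightarrow> pt set set \<Rightarrow> pt set set" where
  "act \<sigma> T = (\<lambda>R. \<sigma> ` R) ` T"

definition s :: "nat \<Rightarrow> nat" where
  "s n = card {C \<in> rectangulations n. \<forall>\<sigma>\<in>D8. \<forall>T\<in>C. act \<sigma> T \<in> C}"

end

theory Submission
  imports Defs
begin

text \<open>The reflections \<open>flip_x\<close>, \<open>flip_y\<close> in the midlines of the square and the transposition
  \<open>prod.swap\<close> map tilings to tilings and, by conjugating the homeomorphisms, equivalent tilings to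
  equivalent ones; so each of them induces an involution on the set of rectangulations with \<open>n\<close>
  tiles. The fixed points of an involution of a finite set have the parity of the set. Since
  \<open>flip_x\<close> and \<open>flip_y\<close> commute and \<open>prod.swap\<close> conjugates one into the other, the three
  reductions can be chained, and the classes fixed by all three generators are exactly those fixed
  by \<open>D8\<close>. Finiteness holds because a product of two increasing piecewise linear
  reparametrisations of \<open>[0,1]\<close> moves every tiling to an equivalent one whose corners lie on a
  fixed finite grid.\<close>

section \<open>Parity of fixed points of involutions\<close>

lemma card_mod_2_eq_card_fixpoints:
  assumes "finite X" "\<And>x. x \<in> X \<Longrightarrow> f x \<in> X" "\<And>x. x \<in> X \<Longrightarrow> f (f x) = x"
  shows "card X mod 2 = card {x \<in> X. f x = x} mod 2"
  using assms
proof (induction "card X" arbitrary: X rule: less_induct)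
  case less
  show ?case
  proof (cases "\<exists>x\<in>X. f x \<noteq> x")
    case False
    then have "{x \<in> X. f x = x} = X" by auto
    then show ?thesis by simp
  next
    case True
    then obtain x where x: "x \<in> X" "f x \<noteq> x" by blast
    define Y where "Y = X - {x, f x}"
    have pair: "{x, f x} \<subseteq> X" "card {x, f x} = 2"
      using x less.prems(2) by auto
    have "card Y = card X - 2" "2 \<le> card X"
      using pair less.prems(1) card_mono[of X "{x, f x}"] unfolding Y_def
      by (auto simp: card_Diff_subset)
    then have card_Y: "card X = card Y + 2" by linarith
    have maps_Y: "f y \<in> Y" if "y \<in> Y" for y
    proof -
      have "y \<in> X" "y \<noteq> x" "y \<noteq> f x" using that unfolding Y_def by auto
      moreover from this have "f (f y) = y" "f (f x) = x" using less.prems(3) x(1) by auto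
      ultimately show ?thesis using less.prems(2) unfolding Y_def by fastforce
    qed
    have "card Y mod 2 = card {y \<in> Y. f y = y} mod 2"
      by (rule less.hyps) (use card_Y less.prems maps_Y in \<open>auto simp: Y_def\<close>)
    moreover have "{y \<in> Y. f y = y} = {y \<in> X. f y = y}"
      using x less.prems(3)[of x] unfolding Y_def by auto
    ultimately show ?thesis using card_Y by simp
  qed
qed

text \<open>If \<open>f\<close> and \<open>h\<close> commute and \<open>g\<close> conjugates \<open>f\<close> into \<open>h\<close>, then \<open>g\<close> preserves the common
  fixed points of \<open>f\<close> and \<open>h\<close>; so the three fixpoint reductions can be chained.\<close>
lemma card_mod_2_eq_card_common_fixpoints:
  assumes X: "finite X"
    and maps: "\<And>x. x \<in> X \<Longrightarrow> f x \<in> X" "\<And>x. x \<in> X \<Longrightarrow> g x \<in> X" "\<And>x. x \<in> X \<Longrightarrow> h x \<in> X"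
    and invol: "\<And>x. x \<in> X \<Longrightarrow> f (f x) = x" "\<And>x. x \<in> X \<Longrightarrow> g (g x) = x"
      "\<And>x. x \<in> X \<Longrightarrow> h (h x) = x"
    and fh: "\<And>x. x \<in> X \<Longrightarrow> f (h x) = h (f x)"
    and gf: "\<And>x. x \<in> X \<Longrightarrow> g (f x) = h (g x)"
  shows "card X mod 2 = card {x \<in> X. f x = x \<and> g x = x \<and> h x = x} mod 2"
proof -
  let ?F = "{x \<in> X. f x = x}" and ?FH = "{x \<in> X. f x = x \<and> h x = x}"
  have "card X mod 2 = card ?F mod 2"
    by (rule card_mod_2_eq_card_fixpoints) (use X maps invol in auto)
  also have "\<dots> = card {x \<in> ?F. h x = x} mod 2"
    by (rule card_mod_2_eq_card_fixpoints) (use X maps invol fh in auto)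
  also have "{x \<in> ?F. h x = x} = ?FH" by auto
  also have "card ?FH mod 2 = card {x \<in> ?FH. g x = x} mod 2"
  proof (rule card_mod_2_eq_card_fixpoints)
    fix x assume x: "x \<in> ?FH"
    then have gx: "g x \<in> X" using maps by blast
    have "h (g x) = g x" using gf[of x] x by (metis (mono_tags, lifting) mem_Collect_eq)
    moreover have "g (f (g x)) = g (g x)" using gf[OF gx] invol x by auto
    then have "f (g x) = g x" using invol(2) maps(1) gx by metis
    ultimately show "g x \<in> ?FH" using gx by blast
  qed (use X invol in auto)
  also have "{x \<in> ?FH. g x = x} = {x \<in> X. f x = x \<and> g x = x \<and> h x = x}" by auto
  finally show ?thesis .
qed

section \<open>Combinatorial equivalence\<close>

lemma homeomorphism_image_interior:
  fixes h :: "'a::euclidean_space \<Rightarrow> 'a"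
  assumes hom: "homeomorphism S T h g" and R: "R \<subseteq> S"
  shows "interior (h ` R) = h ` interior R"
proof
  have inv: "\<forall>x\<in>S. g (h x) = x" "\<forall>y\<in>T. h (g y) = y" "h ` S = T"
    using hom by (auto simp: homeomorphism_def)
  have hR: "h ` R \<subseteq> T" using inv(3) R by blast
  have "continuous_on R h" using continuous_on_subset[OF homeomorphism_cont1[OF hom] R] .
  moreover have "inj_on h R" by (rule inj_on_inverseI[where g=g]) (use inv(1) R in blast)
  ultimately show "h ` interior R \<subseteq> interior (h ` R)"
    using continuous_image_subset_interior[of R h] by auto
  have "continuous_on (h ` R) g" using continuous_on_subset[OF homeomorphism_cont2[OF hom] hR] .
  moreover have "inj_on g (h ` R)" by (rule inj_on_inverseI[where g=h]) (use inv(2) hR in blast)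
  moreover have "g ` h ` R = R"
    using inv(1) R by (simp add: image_comp subset_iff cong: image_cong)
  ultimately have g_int: "g ` interior (h ` R) \<subseteq> interior R"
    using continuous_image_subset_interior[of "h ` R" g] by auto
  show "interior (h ` R) \<subseteq> h ` interior R"
  proof
    fix y assume y: "y \<in> interior (h ` R)"
    then have "y \<in> T" using hR interior_subset[of "h ` R"] by blast
    then have "y = h (g y)" using inv(2) by simp
    moreover have "g y \<in> interior R" using g_int y by blast
    ultimately show "y \<in> h ` interior R" by blast
  qed
qed

lemma homeomorphism_image_frontier:
  fixes h :: "'a::euclidean_space \<Rightarrow> 'a"
  assumes hom: "homeomorphism S T h g" and R: "R \<subseteq> S" "compact R"
  shows "frontier (h ` R) = h ` frontier R"
proof -
  have cont: "continuous_on R h" using continuous_on_subset[OF homeomorphism_cont1[OF hom] R(1)] .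
  have inj: "inj_on h R"
    by (rule inj_on_inverseI[where g=g]) (use hom R(1) in \<open>auto simp: homeomorphism_def\<close>)
  have "closed (h ` R)" using compact_continuous_image[OF cont R(2)] by (rule compact_imp_closed)
  then show ?thesis
    using R homeomorphism_image_interior[OF hom R(1)] inj_on_image_set_diff[OF inj Diff_subset interior_subset]
    by (simp add: frontier_def compact_imp_closed)
qed

definition compact_families :: "pt set set set" where
  "compact_families = {T. \<forall>R\<in>T. R \<subseteq> unit_sq \<and> compact R}"

lemma tiling_in_compact_families: "is_tiling n T \<Longrightarrow> T \<in> compact_families"
  unfolding compact_families_def is_tiling_def is_rect_def by (auto intro!: compact_Times)

lemma tiling_tile_subset_unit_sq: "is_tiling n T \<Longrightarrow> R \<in> T \<Longrightarrow> R \<subseteq> unit_sq"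
  unfolding is_tiling_def by blast

lemma skel_subset_unit_sq: "T \<in> compact_families \<Longrightarrow> skel T \<subseteq> unit_sq"
  unfolding skel_def compact_families_def using frontier_subset_closed compact_imp_closed by blast

lemma act_comp: "act (f \<circ> g) T = act f (act g T)"
  unfolding act_def by (simp add: image_comp)

lemma act_involution: "(\<And>p. r (r p) = p) \<Longrightarrow> act r (act r T) = T"
  unfolding act_def by (simp add: image_comp)

lemma skel_act:
  assumes "homeomorphism unit_sq unit_sq h g" "T \<in> compact_families"
  shows "skel (act h T) = h ` skel T"
  using homeomorphism_image_frontier[OF assms(1)] assms(2)
  unfolding skel_def act_def compact_families_def by auto

lemma act_in_compact_families:
  assumes hom: "homeomorphism unit_sq unit_sq h g" and T: "T \<in> compact_families"
  shows "act h T \<in> compact_families"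
proof -
  have "h ` R \<subseteq> unit_sq \<and> compact (h ` R)" if "R \<in> T" for R
  proof -
    have R: "R \<subseteq> unit_sq" "compact R" using T that unfolding compact_families_def by auto
    have "continuous_on R h" using continuous_on_subset[OF homeomorphism_cont1[OF hom] R(1)] .
    then show ?thesis using R hom compact_continuous_image unfolding homeomorphism_def by blast
  qed
  then show ?thesis unfolding compact_families_def act_def by auto
qed

lemma act_inverse:
  assumes hom: "homeomorphism unit_sq unit_sq h g" and T: "T \<in> compact_families"
  shows "act g (act h T) = T"
proof -
  have "g ` h ` R = R" if "R \<in> T" for R
  proof -
    have "\<forall>x\<in>R. g (h x) = x" using hom T that unfolding compact_families_def homeomorphism_def by blast
    then show ?thesis by (simp add: image_comp cong: image_cong)
  qed
  then show ?thesis unfolding act_def by (simp add: image_comp cong: image_cong)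
qed

lemma preserves_HV_comp:
  assumes "preserves_HV f K" "preserves_HV g (f ` K)"
  shows "preserves_HV (g \<circ> f) K"
  unfolding preserves_HV_def
proof (intro allI impI)
  fix S assume "S \<subseteq> K"
  then have "f ` S \<subseteq> f ` K" by (rule image_mono)
  then show "(hseg S \<longrightarrow> hseg ((g \<circ> f) ` S)) \<and> (vseg S \<longrightarrow> vseg ((g \<circ> f) ` S))"
    using assms \<open>S \<subseteq> K\<close> unfolding preserves_HV_def image_comp[symmetric] by blast
qed

lemma corners_subset_unit_sq: "corners \<subseteq> unit_sq"
  by (auto simp: corners_def unit_sq_def)

lemma comb_equivI:
  assumes "homeomorphism unit_sq unit_sq h g" "\<forall>p\<in>corners. h p = p"
    "T' = act h T" "preserves_HV h (skel T)" "preserves_HV g (skel T')"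
  shows "(T, T') \<in> comb_equiv"
  using assms unfolding comb_equiv_def act_def by auto

lemma comb_equivE:
  assumes "(T, T') \<in> comb_equiv"
  obtains h g where "homeomorphism unit_sq unit_sq h g" "\<forall>p\<in>corners. h p = p"
    "T' = act h T" "preserves_HV h (skel T)" "preserves_HV g (skel T')"
  using assms unfolding comb_equiv_def act_def by auto

lemma comb_equiv_compact_families:
  "T \<in> compact_families \<Longrightarrow> (T, T') \<in> comb_equiv \<Longrightarrow> T' \<in> compact_families"
  by (elim comb_equivE) (simp add: act_in_compact_families)

lemma comb_equiv_sym:
  assumes T: "T \<in> compact_families" and E: "(T, T') \<in> comb_equiv"
  shows "(T', T) \<in> comb_equiv"
proof -
  obtain h g where hom: "homeomorphism unit_sq unit_sq h g" and corners: "\<forall>p\<in>corners. h p = p"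
    and T': "T' = act h T" and HV: "preserves_HV h (skel T)" "preserves_HV g (skel T')"
    using E by (rule comb_equivE)
  show ?thesis
  proof (rule comb_equivI[of g h])
    show "homeomorphism unit_sq unit_sq g h" using hom by (rule homeomorphism_symD)
    have "g (h p) = p" if "p \<in> corners" for p
      using that hom corners_subset_unit_sq unfolding homeomorphism_def by blast
    then show "\<forall>p\<in>corners. g p = p" using corners by simp
    show "T = act g T'" using act_inverse[OF hom T] T' by simp
  qed fact+
qed

lemma comb_equiv_trans:
  assumes T: "T \<in> compact_families" and E: "(T, T') \<in> comb_equiv" "(T', T'') \<in> comb_equiv"
  shows "(T, T'') \<in> comb_equiv"
proof -
  obtain h g where hom: "homeomorphism unit_sq unit_sq h g" and corners: "\<forall>p\<in>corners. h p = p"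
    and T': "T' = act h T" and HV: "preserves_HV h (skel T)" "preserves_HV g (skel T')"
    using E(1) by (rule comb_equivE)
  obtain h' g' where hom': "homeomorphism unit_sq unit_sq h' g'" and corners': "\<forall>p\<in>corners. h' p = p"
    and T'': "T'' = act h' T'" and HV': "preserves_HV h' (skel T')" "preserves_HV g' (skel T'')"
    using E(2) by (rule comb_equivE)
  have T'_fam: "T' \<in> compact_families" using comb_equiv_compact_families[OF T E(1)] .
  have "skel T' = h ` skel T" using skel_act[OF hom T] T' by simp
  moreover have "skel T' = g' ` skel T''"
    using skel_act[OF homeomorphism_symD[OF hom'] act_in_compact_families[OF hom' T'_fam]]
      act_inverse[OF hom' T'_fam] T'' by simp
  ultimately show ?thesis
  proof (intro comb_equivI[of "h' \<circ> h" "g \<circ> g'"])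
    show "homeomorphism unit_sq unit_sq (h' \<circ> h) (g \<circ> g')" using hom hom' by (rule homeomorphism_compose)
    show "\<forall>p\<in>corners. (h' \<circ> h) p = p" using corners corners' by simp
    show "T'' = act (h' \<circ> h) T" using T' T'' by (simp add: act_comp)
  qed (use HV HV' preserves_HV_comp in metis)+
qed

lemma comb_equiv_class_eq:
  assumes "T \<in> compact_families" "(T, T') \<in> comb_equiv"
  shows "comb_equiv `` {T} = comb_equiv `` {T'}"
proof
  show "comb_equiv `` {T'} \<subseteq> comb_equiv `` {T}"
    using comb_equiv_trans[OF assms] by blast
  show "comb_equiv `` {T} \<subseteq> comb_equiv `` {T'}"
    using comb_equiv_trans[OF comb_equiv_compact_families[OF assms] comb_equiv_sym[OF assms]] by blast
qed

section \<open>Symmetries of the square\<close>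

definition maps_intervals :: "(real \<Rightarrow> real) \<Rightarrow> bool" where
  "maps_intervals a \<longleftrightarrow> (\<forall>p q. p < q \<longrightarrow> (\<exists>p' q'. p' < q' \<and> a ` {p..q} = {p'..q'}))"

lemma maps_intervals_id: "maps_intervals id"
  unfolding maps_intervals_def by auto

lemma maps_intervals_reflect: "maps_intervals ((-) c)"
  unfolding maps_intervals_def by (auto intro!: exI[of _ "c - _"])

lemma hsegI: "p < q \<Longrightarrow> hseg ({p..q} \<times> {y})"
  unfolding hseg_def by blast

lemma vsegI: "c < d \<Longrightarrow> vseg ({x} \<times> {c..d})"
  unfolding vseg_def by blast

lemma hseg_map_prod:
  assumes "maps_intervals a" "hseg S"
  shows "hseg (map_prod a b ` S)"
proof -
  obtain p q y where "p < q" "S = {p..q} \<times> {y}" using assms(2) unfolding hseg_def by blast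
  moreover from this obtain p' q' where "p' < q'" "a ` {p..q} = {p'..q'}"
    using assms(1) unfolding maps_intervals_def by blast
  ultimately show ?thesis unfolding hseg_def by (auto simp: map_prod_surj_on)
qed

lemma vseg_map_prod:
  assumes "maps_intervals b" "vseg S"
  shows "vseg (map_prod a b ` S)"
proof -
  obtain x c d where "c < d" "S = {x} \<times> {c..d}" using assms(2) unfolding vseg_def by blast
  moreover from this obtain c' d' where "c' < d'" "b ` {c..d} = {c'..d'}"
    using assms(1) unfolding maps_intervals_def by blast
  ultimately show ?thesis unfolding vseg_def by (auto simp: map_prod_surj_on)
qed

lemma is_rect_map_prod:
  assumes "maps_intervals a" "maps_intervals b" "is_rect R"
  shows "is_rect (map_prod a b ` R)"
proof -
  obtain p q c d where "p < q" "c < d" "R = {p..q} \<times> {c..d}" using assms(3) unfolding is_rect_def by blast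
  moreover from this obtain p' q' c' d' where "p' < q'" "a ` {p..q} = {p'..q'}" "c' < d'" "b ` {c..d} = {c'..d'}"
    using assms(1,2) unfolding maps_intervals_def by meson
  ultimately show ?thesis unfolding is_rect_def by (auto simp: map_prod_surj_on)
qed

lemma hseg_swap: "hseg S \<Longrightarrow> vseg (prod.swap ` S)"
  unfolding hseg_def vseg_def by (metis product_swap)

lemma vseg_swap: "vseg S \<Longrightarrow> hseg (prod.swap ` S)"
  unfolding hseg_def vseg_def by (metis product_swap)

lemma is_rect_swap: "is_rect R \<Longrightarrow> is_rect (prod.swap ` R)"
  unfolding is_rect_def by (metis product_swap)

lemma continuous_on_map_prod:
  assumes "continuous_on UNIV a" "continuous_on UNIV b"
  shows "continuous_on UNIV (map_prod a b)"
proof -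
  have "continuous_on UNIV (\<lambda>x. (a (fst x), b (snd x)))"
    by (intro continuous_on_Pair continuous_on_compose2[OF assms(1)]
        continuous_on_compose2[OF assms(2)] continuous_intros) auto
  then show ?thesis by (simp add: map_prod_def split_beta)
qed

definition square_symmetry :: "(pt \<Rightarrow> pt) \<Rightarrow> bool" where
  "square_symmetry r \<longleftrightarrow> (\<forall>p. r (r p) = p) \<and> continuous_on UNIV r \<and> r ` unit_sq \<subseteq> unit_sq \<and>
     r ` corners \<subseteq> corners \<and> (\<forall>R. is_rect R \<longrightarrow> is_rect (r ` R)) \<and>
     (preserves_HV r UNIV \<or> (\<forall>S. hseg S \<longrightarrow> vseg (r ` S)) \<and> (\<forall>S. vseg S \<longrightarrow> hseg (r ` S)))"

definition flip_x :: "pt \<Rightarrow> pt" where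
  "flip_x = map_prod ((-) 1) id"

definition flip_y :: "pt \<Rightarrow> pt" where
  "flip_y = map_prod id ((-) 1)"

lemma square_symmetry_flip_x: "square_symmetry flip_x"
  unfolding square_symmetry_def flip_x_def preserves_HV_def
  by (auto simp: unit_sq_def corners_def maps_intervals_id maps_intervals_reflect
      hseg_map_prod vseg_map_prod is_rect_map_prod map_prod_surj_on
      intro!: continuous_on_map_prod continuous_intros)

lemma square_symmetry_flip_y: "square_symmetry flip_y"
  unfolding square_symmetry_def flip_y_def preserves_HV_def
  by (auto simp: unit_sq_def corners_def maps_intervals_id maps_intervals_reflect
      hseg_map_prod vseg_map_prod is_rect_map_prod map_prod_surj_on
      intro!: continuous_on_map_prod continuous_intros)

lemma square_symmetry_swap: "square_symmetry prod.swap"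
  unfolding square_symmetry_def
  by (auto simp: unit_sq_def corners_def product_swap hseg_swap vseg_swap is_rect_swap
      intro!: continuous_intros)

lemma square_symmetry_homeomorphism:
  "square_symmetry r \<Longrightarrow> homeomorphism unit_sq unit_sq r r"
  unfolding square_symmetry_def by (intro homeomorphismI) (auto intro: continuous_on_subset)

lemma preserves_HV_conj:
  assumes r: "square_symmetry r" and h: "preserves_HV h K"
  shows "preserves_HV (r \<circ> h \<circ> r) (r ` K)"
  unfolding preserves_HV_def
proof (intro allI impI)
  fix S assume "S \<subseteq> r ` K"
  moreover have "\<And>p. r (r p) = p" using r unfolding square_symmetry_def by blast
  ultimately have "r ` S \<subseteq> K" by force
  then have "(hseg (r ` S) \<longrightarrow> hseg (h ` r ` S)) \<and> (vseg (r ` S) \<longrightarrow> vseg (h ` r ` S))"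
    using h unfolding preserves_HV_def by blast
  then show "(hseg S \<longrightarrow> hseg ((r \<circ> h \<circ> r) ` S)) \<and> (vseg S \<longrightarrow> vseg ((r \<circ> h \<circ> r) ` S))"
    using r unfolding square_symmetry_def preserves_HV_def image_comp[symmetric] by blast
qed

lemma comb_equiv_act:
  assumes r: "square_symmetry r" and T: "T \<in> compact_families" and E: "(T, T') \<in> comb_equiv"
  shows "(act r T, act r T') \<in> comb_equiv"
proof -
  have invol: "\<And>p. r (r p) = p" and corners: "r ` corners \<subseteq> corners"
    using r unfolding square_symmetry_def by blast+
  have hom_r: "homeomorphism unit_sq unit_sq r r" using r by (rule square_symmetry_homeomorphism)
  obtain h g where hom: "homeomorphism unit_sq unit_sq h g" and fix_corners: "\<forall>p\<in>corners. h p = p"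
    and T': "T' = act h T" and HV: "preserves_HV h (skel T)" "preserves_HV g (skel T')"
    using E by (rule comb_equivE)
  have T'_fam: "T' \<in> compact_families" using comb_equiv_compact_families[OF T E] .
  show ?thesis
  proof (rule comb_equivI[of "r \<circ> h \<circ> r" "r \<circ> g \<circ> r"])
    show "homeomorphism unit_sq unit_sq (r \<circ> h \<circ> r) (r \<circ> g \<circ> r)"
      using homeomorphism_compose[OF homeomorphism_compose[OF hom_r hom] hom_r] by (simp add: o_assoc)
    show "\<forall>p\<in>corners. (r \<circ> h \<circ> r) p = p" using fix_corners corners invol by auto
    have "r \<circ> h \<circ> r \<circ> r = r \<circ> h" using invol by (simp add: fun_eq_iff)
    then show "act r T' = act (r \<circ> h \<circ> r) (act r T)" using T' by (metis act_comp)
    show "preserves_HV (r \<circ> h \<circ> r) (skel (act r T))"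
      using skel_act[OF hom_r T] preserves_HV_conj[OF r HV(1)] by simp
    show "preserves_HV (r \<circ> g \<circ> r) (skel (act r T'))"
      using skel_act[OF hom_r T'_fam] preserves_HV_conj[OF r HV(2)] by simp
  qed
qed

lemma act_tiling:
  assumes hom: "homeomorphism unit_sq unit_sq h g"
    and rect: "\<And>R. R \<subseteq> unit_sq \<Longrightarrow> is_rect R \<Longrightarrow> is_rect (h ` R)"
    and T: "is_tiling n T"
  shows "is_tiling n (act h T)"
proof -
  have inv: "\<forall>x\<in>unit_sq. g (h x) = x" "h ` unit_sq = unit_sq"
    using hom unfolding homeomorphism_def by auto
  have inj_h: "inj_on h unit_sq" by (rule inj_on_inverseI[where g=g]) (use inv(1) in blast)
  have T_props: "finite T" "card T = n" "\<forall>R\<in>T. is_rect R" "\<Union>T = unit_sq"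
    and disj: "\<forall>R\<in>T. \<forall>R'\<in>T. R \<noteq> R' \<longrightarrow> interior R \<inter> interior R' = {}"
    using T unfolding is_tiling_def by auto
  have sub: "R \<subseteq> unit_sq" if "R \<in> T" for R using tiling_tile_subset_unit_sq[OF T that] .
  have inj: "inj_on (\<lambda>R. h ` R) T"
    by (rule inj_onI) (use inj_on_image_eq_iff[OF inj_h sub sub] in blast)
  show ?thesis unfolding is_tiling_def act_def
  proof (intro conjI ballI impI)
    show "finite ((\<lambda>R. h ` R) ` T)" using T_props by simp
    show "card ((\<lambda>R. h ` R) ` T) = n" using card_image[OF inj] T_props by simp
    show "is_rect R'" if "R' \<in> (\<lambda>R. h ` R) ` T" for R' using that rect sub T_props(3) by auto
    show "\<Union>((\<lambda>R. h ` R) ` T) = unit_sq" using T_props(4) inv(2) image_Union[of h T] by simp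
    fix A B assume "A \<in> (\<lambda>R. h ` R) ` T" "B \<in> (\<lambda>R. h ` R) ` T" "A \<noteq> B"
    then obtain R R' where R: "R \<in> T" "A = h ` R" "R' \<in> T" "B = h ` R'" "R \<noteq> R'" by blast
    have "interior A \<inter> interior B = h ` interior R \<inter> h ` interior R'"
      using R homeomorphism_image_interior[OF hom sub] by simp
    also have "\<dots> = h ` (interior R \<inter> interior R')"
      using inj_on_image_Int[OF inj_h order_trans[OF interior_subset sub[OF R(1)]]
          order_trans[OF interior_subset sub[OF R(3)]]] by simp
    also have "\<dots> = {}" using disj R by simp
    finally show "interior A \<inter> interior B = {}" .
  qed
qed

lemma act_image_class:
  assumes r: "square_symmetry r" and T: "T \<in> compact_families"
  shows "act r ` (comb_equiv `` {T}) = comb_equiv `` {act r T}"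
proof
  show "act r ` (comb_equiv `` {T}) \<subseteq> comb_equiv `` {act r T}"
    using comb_equiv_act[OF r T] by blast
  have invol: "\<And>p. r (r p) = p" using r unfolding square_symmetry_def by blast
  have rT: "act r T \<in> compact_families"
    using act_in_compact_families[OF square_symmetry_homeomorphism[OF r] T] .
  show "comb_equiv `` {act r T} \<subseteq> act r ` (comb_equiv `` {T})"
  proof
    fix T' assume "T' \<in> comb_equiv `` {act r T}"
    then have "(T, act r T') \<in> comb_equiv"
      using comb_equiv_act[OF r rT, of T'] act_involution[OF invol, of T] by simp
    then show "T' \<in> act r ` (comb_equiv `` {T})"
      by (intro image_eqI[of _ _ "act r T'"]) (simp_all add: act_involution[OF invol])
  qed
qed

lemma rectangulations_eq: "rectangulations n = (\<lambda>T. comb_equiv `` {T}) ` tilings n"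
  unfolding rectangulations_def quotient_def by auto

lemma act_image_rectangulation:
  assumes r: "square_symmetry r" and C: "C \<in> rectangulations n"
  shows "act r ` C \<in> rectangulations n"
proof -
  obtain T where T: "is_tiling n T" "C = comb_equiv `` {T}"
    using C unfolding rectangulations_eq tilings_def by blast
  have "is_tiling n (act r T)"
    using act_tiling[OF square_symmetry_homeomorphism[OF r] _ T(1)] r
    unfolding square_symmetry_def by blast
  then show ?thesis
    using act_image_class[OF r tiling_in_compact_families[OF T(1)]] T(2)
    unfolding rectangulations_eq tilings_def by auto
qed

lemma act_image_comp: "act f ` act g ` C = act (f \<circ> g) ` C"
  unfolding image_comp by (rule image_cong) (simp_all add: act_comp)

lemma square_symmetry_involutive: "square_symmetry r \<Longrightarrow> r (r p) = p"
  unfolding square_symmetry_def by blast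

lemma image_involution_eq_iff:
  assumes "\<And>x. f (f x) = x"
  shows "f ` C = C \<longleftrightarrow> (\<forall>x\<in>C. f x \<in> C)"
proof
  assume stable: "\<forall>x\<in>C. f x \<in> C"
  show "f ` C = C"
  proof
    show "f ` C \<subseteq> C" using stable by blast
    show "C \<subseteq> f ` C"
    proof
      fix x assume "x \<in> C"
      then show "x \<in> f ` C" using stable assms[of x] by (metis image_eqI)
    qed
  qed
qed blast

lemma D8_eq:
  "D8 = {id, flip_x, flip_y, flip_x \<circ> flip_y, prod.swap, flip_x \<circ> prod.swap, prod.swap \<circ> flip_x,
         flip_x \<circ> flip_y \<circ> prod.swap}"
  unfolding D8_def flip_x_def flip_y_def
  by (intro arg_cong2[where f=insert] refl ext) auto

lemma D8_fixed_iff_generators_fixed: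
  "(\<forall>\<sigma>\<in>D8. \<forall>T\<in>C. act \<sigma> T \<in> C) \<longleftrightarrow> (\<forall>r\<in>{flip_x, prod.swap, flip_y}. act r ` C = C)"
proof -
  let ?stable = "\<lambda>f. \<forall>T\<in>C. act f T \<in> C"
  have "(\<forall>\<sigma>\<in>D8. ?stable \<sigma>) \<longleftrightarrow> ?stable flip_x \<and> ?stable prod.swap \<and> ?stable flip_y"
  proof
    assume "\<forall>\<sigma>\<in>D8. ?stable \<sigma>"
    then show "?stable flip_x \<and> ?stable prod.swap \<and> ?stable flip_y" unfolding D8_eq by simp
  next
    assume gens: "?stable flip_x \<and> ?stable prod.swap \<and> ?stable flip_y"
    then have "?stable (flip_x \<circ> flip_y)" "?stable (flip_x \<circ> prod.swap)"
      "?stable (prod.swap \<circ> flip_x)" "?stable (flip_x \<circ> flip_y \<circ> prod.swap)"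
      by (auto simp: act_comp)
    moreover have "?stable id" by (simp add: act_def)
    ultimately show "\<forall>\<sigma>\<in>D8. ?stable \<sigma>" using gens unfolding D8_eq by simp
  qed
  moreover have "act r ` C = C \<longleftrightarrow> ?stable r" if "square_symmetry r" for r
    by (rule image_involution_eq_iff) (simp add: act_involution square_symmetry_involutive[OF that])
  ultimately show ?thesis
    using square_symmetry_flip_x square_symmetry_swap square_symmetry_flip_y by simp
qed

lemma card_rectangulations_mod_2:
  assumes fin: "finite (rectangulations n)"
  shows "card (rectangulations n) mod 2 =
    card {C \<in> rectangulations n. \<forall>r\<in>{flip_x, prod.swap, flip_y}. act r ` C = C} mod 2"
proof -
  have invol: "act r ` act r ` C = C" if "square_symmetry r" for r C
    by (simp add: image_comp comp_def act_involution square_symmetry_involutive[OF that])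
  have "flip_x \<circ> flip_y = flip_y \<circ> flip_x" "prod.swap \<circ> flip_x = flip_y \<circ> prod.swap"
    by (auto simp: flip_x_def flip_y_def fun_eq_iff)
  then have "act flip_x ` act flip_y ` C = act flip_y ` act flip_x ` C"
    "act prod.swap ` act flip_x ` C = act flip_y ` act prod.swap ` C" for C
    by (simp_all add: act_image_comp)
  then have "card (rectangulations n) mod 2 = card {C \<in> rectangulations n.
      act flip_x ` C = C \<and> act prod.swap ` C = C \<and> act flip_y ` C = C} mod 2"
    using square_symmetry_flip_x square_symmetry_swap square_symmetry_flip_y
    by (intro card_mod_2_eq_card_common_fixpoints fin)
      (simp_all add: act_image_rectangulation invol)
  then show ?thesis by simp
qed

section \<open>Finiteness of the set of rectangulations\<close>

definition unit_reparam :: "(real \<Rightarrow> real) \<Rightarrow> bool" where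
  "unit_reparam a \<longleftrightarrow> continuous_on UNIV a \<and> strict_mono a \<and> a 0 = 0 \<and> a 1 = 1"

lemma unit_reparam_image_Icc:
  assumes a: "unit_reparam a" and "p \<le> q"
  shows "a ` {p..q} = {a p..a q}"
proof
  have mono: "strict_mono a" using a by (simp add: unit_reparam_def)
  then show "a ` {p..q} \<subseteq> {a p..a q}" by (auto simp: strict_mono_less_eq)
  have "continuous_on {p..q} a" using a continuous_on_subset unfolding unit_reparam_def by blast
  then show "{a p..a q} \<subseteq> a ` {p..q}"
    using IVT'[of a p _ q] \<open>p \<le> q\<close> by (fastforce simp: image_iff)
qed

lemma unit_reparam_image_unit: "unit_reparam a \<Longrightarrow> a ` {0..1} = {0..1}"
  using unit_reparam_image_Icc[of a 0 1] by (simp add: unit_reparam_def)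

lemma unit_reparam_maps_intervals:
  assumes a: "unit_reparam a"
  shows "maps_intervals a"
  unfolding maps_intervals_def
proof (intro allI impI)
  fix p q :: real assume "p < q"
  then have "a p < a q" "a ` {p..q} = {a p..a q}"
    using a unit_reparam_image_Icc[OF a, of p q] by (simp_all add: unit_reparam_def strict_mono_less)
  then show "\<exists>p' q'. p' < q' \<and> a ` {p..q} = {p'..q'}" by blast
qed

lemma unit_reparam_surj_unit:
  "unit_reparam a \<Longrightarrow> y \<in> {0..1} \<Longrightarrow> \<exists>x\<in>{0..1}. a x = y"
  using unit_reparam_image_unit by (metis imageE)

lemma map_prod_unit_reparam_homeomorphism:
  assumes a: "unit_reparam a" and b: "unit_reparam b"
  obtains g where "homeomorphism unit_sq unit_sq (map_prod a b) g"
proof -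
  have "\<exists>g. homeomorphism unit_sq unit_sq (map_prod a b) g"
  proof (rule homeomorphism_compact)
    show "compact unit_sq" unfolding unit_sq_def by (intro compact_Times compact_Icc)
    show "continuous_on unit_sq (map_prod a b)"
      using continuous_on_map_prod a b continuous_on_subset unfolding unit_reparam_def by blast
    show "map_prod a b ` unit_sq = unit_sq"
      unfolding unit_sq_def using a b by (intro map_prod_surj_on) (auto simp: unit_reparam_image_unit)
    have "inj a" "inj b" using a b by (auto simp: unit_reparam_def strict_mono_imp_inj_on)
    then show "inj_on (map_prod a b) unit_sq"
      unfolding unit_sq_def by (intro map_prod_inj_on) (auto intro: inj_on_subset)
  qed
  then show ?thesis using that by blast
qed

lemma preserves_HV_inverse:
  assumes hom: "homeomorphism unit_sq unit_sq h g" and K: "K \<subseteq> unit_sq"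
    and reflects: "\<And>S. S \<subseteq> K \<Longrightarrow> (hseg (h ` S) \<longrightarrow> hseg S) \<and> (vseg (h ` S) \<longrightarrow> vseg S)"
  shows "preserves_HV g (h ` K)"
  unfolding preserves_HV_def
proof (intro allI impI)
  fix S assume S: "S \<subseteq> h ` K"
  have inv: "\<forall>x\<in>unit_sq. g (h x) = x" "\<forall>y\<in>unit_sq. h (g y) = y" "h ` unit_sq = unit_sq"
    using hom by (auto simp: homeomorphism_def)
  have "g y \<in> K" if "y \<in> S" for y
  proof -
    obtain x where "x \<in> K" "y = h x" using S \<open>y \<in> S\<close> by blast
    then show ?thesis using K inv(1) by auto
  qed
  then have gS: "g ` S \<subseteq> K" by blast
  have "\<forall>y\<in>S. h (g y) = y" using S K inv(2,3) by blast
  then have "h ` g ` S = S" by (simp add: image_comp cong: image_cong)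
  with gS show "(hseg S \<longrightarrow> hseg (g ` S)) \<and> (vseg S \<longrightarrow> vseg (g ` S))"
    using reflects[of "g ` S"] by simp
qed

lemma map_prod_unit_reparam_preimage_box:
  assumes a: "unit_reparam a" and b: "unit_reparam b" and S: "S \<subseteq> unit_sq"
    and img: "map_prod a b ` S = {p..q} \<times> {c..d}" and "p \<le> q" "c \<le> d"
  obtains p' q' c' d' where "S = {p'..q'} \<times> {c'..d'}" "a p' = p" "a q' = q" "b c' = c" "b d' = d"
    "p' \<le> q'" "c' \<le> d'"
proof -
  have "map_prod a b ` unit_sq = unit_sq"
    unfolding unit_sq_def using a b by (intro map_prod_surj_on) (simp_all add: unit_reparam_image_unit)
  then have "map_prod a b ` S \<subseteq> unit_sq" using image_mono[OF S, of "map_prod a b"] by simp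
  then have "(p, c) \<in> unit_sq" "(q, d) \<in> unit_sq"
    using img \<open>p \<le> q\<close> \<open>c \<le> d\<close> by auto
  then have "p \<in> {0..1}" "q \<in> {0..1}" "c \<in> {0..1}" "d \<in> {0..1}"
    unfolding unit_sq_def by auto
  then obtain p' q' c' d' where pre: "a p' = p" "a q' = q" "b c' = c" "b d' = d"
    using unit_reparam_surj_unit[OF a] unit_reparam_surj_unit[OF b] by metis
  have mono: "strict_mono a" "strict_mono b" using a b by (simp_all add: unit_reparam_def)
  have le: "p' \<le> q'" "c' \<le> d'"
    using pre \<open>p \<le> q\<close> \<open>c \<le> d\<close> strict_mono_less_eq[OF mono(1)] strict_mono_less_eq[OF mono(2)]
    by metis+
  have "map_prod a b ` ({p'..q'} \<times> {c'..d'}) = {p..q} \<times> {c..d}"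
    using le pre by (intro map_prod_surj_on) (simp_all add: unit_reparam_image_Icc a b)
  moreover have "inj (map_prod a b)"
    using mono map_prod_inj_on[of a UNIV b UNIV] by (simp add: strict_mono_imp_inj_on)
  ultimately have "S = {p'..q'} \<times> {c'..d'}" using img by (metis inj_image_eq_iff)
  then show ?thesis using that pre le by blast
qed

lemma map_prod_unit_reparam_reflects_HV:
  assumes a: "unit_reparam a" and b: "unit_reparam b" and S: "S \<subseteq> unit_sq"
  shows "(hseg (map_prod a b ` S) \<longrightarrow> hseg S) \<and> (vseg (map_prod a b ` S) \<longrightarrow> vseg S)"
proof (intro conjI impI)
  have mono: "strict_mono a" "strict_mono b" using a b by (simp_all add: unit_reparam_def)
  assume "hseg (map_prod a b ` S)"
  then obtain p q y where "p < q" "map_prod a b ` S = {p..q} \<times> {y..y}" unfolding hseg_def by auto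
  then show "hseg S"
    using mono by (elim map_prod_unit_reparam_preimage_box[OF a b S])
      (auto simp: strict_mono_less strict_mono_eq intro: hsegI)
next
  have mono: "strict_mono a" "strict_mono b" using a b by (simp_all add: unit_reparam_def)
  assume "vseg (map_prod a b ` S)"
  then obtain x c d where "c < d" "map_prod a b ` S = {x..x} \<times> {c..d}" unfolding vseg_def by auto
  then show "vseg S"
    using mono by (elim map_prod_unit_reparam_preimage_box[OF a b S])
      (auto simp: strict_mono_less strict_mono_eq intro: vsegI)
qed

lemma comb_equiv_map_prod_unit_reparam:
  assumes a: "unit_reparam a" and b: "unit_reparam b" and T: "T \<in> compact_families"
  shows "(T, act (map_prod a b) T) \<in> comb_equiv"
proof -
  obtain g where hom: "homeomorphism unit_sq unit_sq (map_prod a b) g"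
    using map_prod_unit_reparam_homeomorphism[OF a b] .
  show ?thesis
  proof (rule comb_equivI[OF hom])
    show "\<forall>p\<in>corners. map_prod a b p = p" using a b by (auto simp: corners_def unit_reparam_def)
    show "preserves_HV (map_prod a b) (skel T)"
      unfolding preserves_HV_def
      using hseg_map_prod vseg_map_prod unit_reparam_maps_intervals a b by blast
    show "preserves_HV g (skel (act (map_prod a b) T))"
      unfolding skel_act[OF hom T]
      using preserves_HV_inverse[OF hom skel_subset_unit_sq[OF T]] skel_subset_unit_sq[OF T]
        map_prod_unit_reparam_reflects_HV[OF a b] by blast
  qed simp
qed

lemma strict_mono_glue:
  fixes f g :: "real \<Rightarrow> real"
  assumes f: "strict_mono f" and g: "strict_mono g"
  shows "strict_mono (\<lambda>z. f (min z c) + g (max z c))"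
  unfolding strict_mono_def
proof (intro allI impI)
  fix z w :: real assume "z < w"
  then have "min z c \<le> min w c" "max z c \<le> max w c" "min z c < min w c \<or> max z c < max w c"
    by linarith+
  then have "f (min z c) \<le> f (min w c)" "g (max z c) \<le> g (max w c)"
    "f (min z c) < f (min w c) \<or> g (max z c) < g (max w c)"
    using f g by (simp_all add: strict_mono_less_eq strict_mono_less)
  then show "f (min z c) + g (max z c) < f (min w c) + g (max w c)" by linarith
qed

text \<open>The piecewise linear interpolant through the nodes: \<open>min\<close> and \<open>max\<close> glue the first linear
  piece to the interpolant of the remaining nodes at the second node; beyond the nodes it continues
  by translation.\<close>
fun pl_interp :: "(real \<times> real) list \<Rightarrow> real \<Rightarrow> real" where
  "pl_interp [] = id"
| "pl_interp [(x, y)] = (\<lambda>z. z - x + y)"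
| "pl_interp ((x0, y0) # (x1, y1) # ps) = (\<lambda>z.
     (y0 + (min z x1 - x0) * (y1 - y0) / (x1 - x0)) + pl_interp ((x1, y1) # ps) (max z x1) - y1)"

lemma pl_interp_interpolates:
  assumes "sorted_wrt (\<lambda>p q. fst p < fst q \<and> snd p < snd q) ps"
  shows "strict_mono (pl_interp ps) \<and> continuous_on UNIV (pl_interp ps) \<and>
    (\<forall>(x, y)\<in>set ps. pl_interp ps x = y)"
  using assms
proof (induction ps rule: pl_interp.induct)
  case 1
  then show ?case by (simp add: strict_mono_def continuous_on_id)
next
  case (2 x y)
  have "continuous_on UNIV (\<lambda>z. z - x + y)" by (intro continuous_intros)
  then show ?case by (simp add: strict_mono_def)
next
  case (3 x0 y0 x1 y1 ps)
  let ?P = "pl_interp ((x1, y1) # ps)"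
  let ?L = "\<lambda>v. y0 + (v - x0) * (y1 - y0) / (x1 - x0)"
  have lt: "x0 < x1" "y0 < y1" and later: "\<forall>(x, y)\<in>set ps. x1 < x"
    using "3.prems" by auto
  have IH: "strict_mono ?P" "continuous_on UNIV ?P" "\<forall>(x, y)\<in>set ((x1, y1) # ps). ?P x = y"
    using "3.IH" "3.prems" by auto
  have eq: "pl_interp ((x0, y0) # (x1, y1) # ps) = (\<lambda>z. ?L (min z x1) + ?P (max z x1) - y1)"
    by simp
  have "strict_mono ?L"
    using lt by (auto simp: strict_mono_def divide_strict_right_mono mult_strict_right_mono)
  then have "strict_mono (\<lambda>z. ?L (min z x1) + ?P (max z x1))" using IH(1) by (rule strict_mono_glue)
  then have "strict_mono (pl_interp ((x0, y0) # (x1, y1) # ps))"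
    unfolding eq strict_mono_def by simp
  moreover have "continuous_on UNIV (pl_interp ((x0, y0) # (x1, y1) # ps))"
    unfolding eq by (intro continuous_intros continuous_on_compose2[OF IH(2)]) (use lt in auto)
  moreover have "pl_interp ((x0, y0) # (x1, y1) # ps) x = y" if "(x, y) \<in> set ((x0, y0) # (x1, y1) # ps)" for x y
  proof -
    have "x = x0 \<and> y = y0 \<or> x1 \<le> x \<and> (x, y) \<in> set ((x1, y1) # ps)"
      using that later by fastforce
    then show ?thesis using IH(3) lt by (auto simp: eq)
  qed
  ultimately show ?case by blast
qed

definition grid :: "nat \<Rightarrow> real set" where
  "grid N = {real j / real m | j m. j \<le> m \<and> m \<le> N}"

lemma finite_grid: "finite (grid N)"
proof -
  have "grid N \<subseteq> (\<lambda>(j, m). real j / real m) ` ({..N} \<times> {..N})"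
    unfolding grid_def by auto
  then show ?thesis by (rule finite_subset) auto
qed

lemma grid_mono: "M \<le> N \<Longrightarrow> grid M \<subseteq> grid N"
  unfolding grid_def by fastforce

lemma unit_reparam_onto_grid:
  assumes X: "finite X" "X \<subseteq> {0..1}" "0 \<in> X" "1 \<in> X"
  obtains a where "unit_reparam a" "a ` X \<subseteq> grid (card X - 1)"
proof -
  define k where "k = card X"
  define xs where "xs = sorted_list_of_set X"
  define ys where "ys = map (\<lambda>i. real i / real (k - 1)) [0..<k]"
  define a where "a = pl_interp (zip xs ys)"
  have xs: "sorted_wrt (<) xs" "set xs = X" "length xs = k"
    using X(1) by (simp_all add: xs_def k_def)
  have "card {0 :: real, 1} \<le> k" using X card_mono unfolding k_def by (metis empty_subsetI insert_subset)
  then have k: "real (k - 1) > 0" by simp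
  have ys: "length ys = k" "\<And>i. i < k \<Longrightarrow> ys ! i = real i / real (k - 1)"
    by (simp_all add: ys_def)
  have sorted: "sorted_wrt (\<lambda>p q. fst p < fst q \<and> snd p < snd q) (zip xs ys)"
    using xs ys k by (auto simp: sorted_wrt_iff_nth_less divide_strict_right_mono)
  then have a: "strict_mono a" "continuous_on UNIV a" "\<forall>(x, y)\<in>set (zip xs ys). a x = y"
    using pl_interp_interpolates[OF sorted] unfolding a_def by simp_all
  have val: "a (xs ! i) = real i / real (k - 1)" if "i < k" for i
    using a(3) that xs(3) ys by (force simp: in_set_zip)
  have val_X: "\<exists>i<k. a x = real i / real (k - 1)" if "x \<in> X" for x
    using that xs val by (metis in_set_conv_nth)
  have "a 0 \<le> a (xs ! 0)" "a (xs ! (k - 1)) \<le> a 1"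
    using xs X(2) k nth_mem[of 0 xs] nth_mem[of "k - 1" xs] a(1)
    by (auto simp: strict_mono_less_eq)
  moreover have "0 \<le> a 0" "a 1 \<le> 1" using val_X[OF X(3)] val_X[OF X(4)] k by auto
  ultimately have "a 0 = 0" "a 1 = 1" using val[of 0] val[of "k - 1"] k by auto
  then have "unit_reparam a" using a unfolding unit_reparam_def by blast
  moreover have "a ` X \<subseteq> grid (card X - 1)"
    using val_X unfolding grid_def k_def by fastforce
  ultimately show ?thesis using that by blast
qed

text \<open>\<open>0\<close> and \<open>1\<close> are included so that the interpolating reparametrisation fixes them.\<close>
definition tile_coords :: "pt set set \<Rightarrow> real set" where
  "tile_coords T = {0, 1} \<union> (\<Union>R\<in>T. {Inf (fst ` R), Sup (fst ` R), Inf (snd ` R), Sup (snd ` R)})"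

lemma tile_in_tile_coords:
  assumes T: "is_tiling n T" and R: "R \<in> T"
  obtains p q c d where "R = {p..q} \<times> {c..d}" "p < q" "c < d" "{p, q, c, d} \<subseteq> tile_coords T"
proof -
  have "is_rect R" using T R by (simp add: is_tiling_def)
  then obtain p q c d where box: "p < q" "c < d" "R = {p..q} \<times> {c..d}"
    unfolding is_rect_def by blast
  then have "Inf (fst ` R) = p" "Sup (fst ` R) = q" "Inf (snd ` R) = c" "Sup (snd ` R) = d"
    by simp_all
  then have "{p, q, c, d} \<subseteq> tile_coords T" using R unfolding tile_coords_def by blast
  then show ?thesis using that box by blast
qed

lemma tile_coords_tiling:
  assumes T: "is_tiling n T"
  shows "finite (tile_coords T)" "card (tile_coords T) \<le> 4 * n + 2"
    "tile_coords T \<subseteq> {0..1}" "0 \<in> tile_coords T" "1 \<in> tile_coords T"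
proof -
  have fin: "finite T" "card T = n" using T unfolding is_tiling_def by auto
  then show "finite (tile_coords T)" unfolding tile_coords_def by simp
  have four: "card {w, x, y, z} \<le> 4" for w x y z :: real
    using card_length[of "[w, x, y, z]"] by simp
  let ?U = "\<Union>R\<in>T. {Inf (fst ` R), Sup (fst ` R), Inf (snd ` R), Sup (snd ` R)}"
  have "card ?U \<le> (\<Sum>R\<in>T. card {Inf (fst ` R), Sup (fst ` R), Inf (snd ` R), Sup (snd ` R)})"
    by (rule card_UN_le[OF fin(1)])
  also have "\<dots> \<le> (\<Sum>R\<in>T. 4)" by (rule sum_mono) (rule four)
  also have "\<dots> = 4 * n" using fin(2) by simp
  finally have "card ?U \<le> 4 * n" .
  moreover have "card (tile_coords T) \<le> card {0 :: real, 1} + card ?U"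
    unfolding tile_coords_def by (rule card_Un_le)
  ultimately show "card (tile_coords T) \<le> 4 * n + 2" by simp
  have "{Inf (fst ` R), Sup (fst ` R), Inf (snd ` R), Sup (snd ` R)} \<subseteq> {0..1}" if R: "R \<in> T" for R
  proof -
    obtain p q c d where box: "R = {p..q} \<times> {c..d}" "p < q" "c < d" "{p, q, c, d} \<subseteq> tile_coords T"
      using tile_in_tile_coords[OF T R] .
    moreover have "R \<subseteq> unit_sq" using tiling_tile_subset_unit_sq[OF T R] .
    ultimately have "(p, c) \<in> unit_sq" "(q, d) \<in> unit_sq" by auto
    then show ?thesis using box(1-3) unfolding unit_sq_def by simp
  qed
  then show "tile_coords T \<subseteq> {0..1}"
    unfolding tile_coords_def by (intro Un_least UN_least) simp_all
  show "0 \<in> tile_coords T" "1 \<in> tile_coords T" unfolding tile_coords_def by simp_all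
qed

lemma finite_rectangulations: "finite (rectangulations n)"
proof -
  define G where "G = grid (4 * n + 1)"
  define boxes where "boxes = (\<lambda>(p, q, c, d). {p..q} \<times> {c..d}) ` (G \<times> G \<times> G \<times> G)"
  have "finite boxes" unfolding boxes_def G_def using finite_grid by simp
  have "rectangulations n \<subseteq> (\<lambda>T. comb_equiv `` {T}) ` Pow boxes"
  proof
    fix C assume "C \<in> rectangulations n"
    then obtain T where T: "is_tiling n T" "C = comb_equiv `` {T}"
      unfolding rectangulations_eq tilings_def by blast
    note coords = tile_coords_tiling[OF T(1)]
    obtain a where a: "unit_reparam a" "a ` tile_coords T \<subseteq> grid (card (tile_coords T) - 1)"
      using unit_reparam_onto_grid[OF coords(1,3,4,5)] .
    have "card (tile_coords T) - 1 \<le> 4 * n + 1" using coords(2) by linarith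
    then have aG: "a ` tile_coords T \<subseteq> G" using a(2) grid_mono unfolding G_def by blast
    define T' where "T' = act (map_prod a a) T"
    have "C = comb_equiv `` {T'}"
      using comb_equiv_class_eq[OF tiling_in_compact_families[OF T(1)]]
        comb_equiv_map_prod_unit_reparam[OF a(1) a(1) tiling_in_compact_families[OF T(1)]] T(2)
      unfolding T'_def by simp
    moreover have "T' \<subseteq> boxes"
    proof
      fix R' assume "R' \<in> T'"
      then obtain R where R: "R \<in> T" "R' = map_prod a a ` R" unfolding T'_def act_def by blast
      obtain p q c d where box: "R = {p..q} \<times> {c..d}" "p < q" "c < d" "{p, q, c, d} \<subseteq> tile_coords T"
        using tile_in_tile_coords[OF T(1) R(1)] .
      have "R' = {a p..a q} \<times> {a c..a d}"
        using R(2) box(1-3) by (simp add: map_prod_surj_on unit_reparam_image_Icc[OF a(1)])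
      moreover have "(a p, a q, a c, a d) \<in> G \<times> G \<times> G \<times> G" using aG box(4) by auto
      ultimately show "R' \<in> boxes" unfolding boxes_def by (auto intro!: image_eqI)
    qed
    ultimately show "C \<in> (\<lambda>T. comb_equiv `` {T}) ` Pow boxes" by blast
  qed
  then show ?thesis using \<open>finite boxes\<close> finite_subset by blast
qed

lemma s_eq_card_generators_fixed:
  "s n = card {C \<in> rectangulations n. \<forall>r\<in>{flip_x, prod.swap, flip_y}. act r ` C = C}"
  unfolding s_def D8_fixed_iff_generators_fixed ..

theorem lemma9:
  fixes n :: nat
  assumes "n \<ge> 1"
  shows "s n mod 2 = t n mod 2"
  unfolding s_eq_card_generators_fixed t_def
  using card_rectangulations_mod_2[OF finite_rectangulations] by simp

end
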